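(* Let $\mathbf{c}\in\mathbb{R}^n_{\ge0}$, $0<r\le 1$ with $\|\mathbf{c}\|_1\le r$, and let $M>0$. Then $$\frac{\Psi_n(1,r)}{\Psi_n\big(1+\tfrac nM,\ r(1+\tfrac nM)\big)}\ge\Big(\frac{M}{M+n}\Big)^{2n}.$$
   Context: Given $\mathbf{c}=(c_1,\dots,c_n)$, define $\Psi_0(u,v)=1$ if $u\ge0$ and $v\ge0$, and $0$ otherwise, and inductively for $i=1,\dots,n$, $\Psi_i(u,v)=\int_{-1}^1\Psi_{i-1}(u-|s|,\,v-|s-c_i|)\,ds$ for $u,v\in\mathbb{R}$. *)

theory Defs
  imports "HOL-Analysis.Analysis"
begin

text \<open>Psi c i u v, with c given as a sequence indexed from 1 (c 1, ..., c n).\<close>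
primrec Psi :: "(nat \<Rightarrow> real) \<Rightarrow> nat \<Rightarrow> real \<Rightarrow> real \<Rightarrow> real" where
  "Psi c 0 u v = (if u \<ge> 0 \<and> v \<ge> 0 then 1 else 0)"
| "Psi c (Suc i) u v =
     integral {-1..1} (\<lambda>s. Psi c i (u - \<bar>s\<bar>) (v - \<bar>s - c (Suc i)\<bar>))"

end

theory Submission
  imports Defs
begin

text \<open>
  Let \<open>S = (c\<^sub>1 + \<dots> + c\<^sub>n) / 2\<close> and \<open>0 < m \<le> 1\<close>. In the \<open>i\<close>-th integral substitute
  \<open>t = m s + (1 - m) c\<^sub>i / 2\<close>: this maps \<open>[-1, 1]\<close> into itself with Jacobian \<open>m\<close>, and by convexity of
  \<open>|\<cdot>|\<close> it satisfies \<open>|t| \<le> m |s| + (1 - m) c\<^sub>i / 2\<close> and \<open>|t - c\<^sub>i| \<le> m |s - c\<^sub>i| + (1 - m) c\<^sub>i / 2\<close>.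
  Since \<open>\<Psi>\<close> is monotone, induction on \<open>n\<close> gives
  \<open>m\<^sup>n \<Psi>\<^sub>n(u, v) \<le> \<Psi>\<^sub>n(m u + (1 - m) S, m v + (1 - m) S)\<close>.
  With \<open>q = M / (M + n)\<close>, \<open>m = q\<^sup>2\<close> and \<open>(u, v) = (1/q, r/q)\<close>, the hypothesis \<open>2 S \<le> r \<le> 1\<close> makes the
  right-hand side at most \<open>\<Psi>\<^sub>n(1, r)\<close>; the denominator is positive since it dominates
  \<open>\<Psi>\<^sub>n(1, r) > 0\<close>, which holds because \<open>S < min 1 r\<close>.
  The integrands are integrable because \<open>\<Psi>\<^sub>k\<close> is Lipschitz for \<open>k \<ge> 1\<close>.
\<close>

lemma Psi_0_shift_eq:
  "Psi c 0 (a - \<bar>s\<bar>) (b - \<bar>s - d\<bar>) = (if s \<in> {max (-a) (d - b) .. min a (d + b)} then 1 else 0)"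
  by (auto simp: abs_le_iff)

lemma integrable_Psi_0_shift: "(\<lambda>s. Psi c 0 (a - \<bar>s\<bar>) (b - \<bar>s - d\<bar>)) integrable_on {x..y}"
proof -
  have "(\<lambda>s. if s \<in> {max (-a) (d - b) .. min a (d + b)} then (1::real) else 0) integrable_on {x..y}"
    by (subst integrable_restrict_Int) auto
  then show ?thesis
    by (subst Psi_0_shift_eq)
qed

lemma Psi_1_eq: "Psi c 1 u v = max 0 (min (min u (c 1 + v)) 1 - max (max (-u) (c 1 - v)) (-1))"
proof -
  have "Psi c 1 u v =
      integral {-1..1} (\<lambda>s. if s \<in> {max (-u) (c 1 - v) .. min u (c 1 + v)} then (1::real) else 0)"
    using Psi_0_shift_eq[of c u _ v "c 1"] by simp
  also have "\<dots> = integral ({max (-u) (c 1 - v) .. min u (c 1 + v)} \<inter> {-1..1}) (\<lambda>s. 1::real)"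
    by (rule integral_restrict_Int)
  also have "\<dots> = measure lborel {max (max (-u) (c 1 - v)) (-1) .. min (min u (c 1 + v)) 1}"
    by (simp only: Int_atLeastAtMost integral_const_real) simp
  also have "\<dots> = max 0 (min (min u (c 1 + v)) 1 - max (max (-u) (c 1 - v)) (-1))"
    using measure_lborel_Icc by (simp only: max_def) auto
  finally show ?thesis .
qed

lemma abs_min_diff_le: "\<bar>min (a::real) b - min a' b'\<bar> \<le> \<bar>a - a'\<bar> + \<bar>b - b'\<bar>"
  by (simp add: min_def abs_if)

lemma abs_max_diff_le: "\<bar>max (a::real) b - max a' b'\<bar> \<le> \<bar>a - a'\<bar> + \<bar>b - b'\<bar>"
  by (simp add: max_def abs_if)

lemma abs_max0_diff_le: "\<bar>max 0 ((a::real) - b) - max 0 (a' - b')\<bar> \<le> \<bar>a - a'\<bar> + \<bar>b - b'\<bar>"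
  by (simp add: max_def abs_if)

lemma Psi_1_lipschitz: "\<bar>Psi c 1 u v - Psi c 1 u' v'\<bar> \<le> 2 * (\<bar>u - u'\<bar> + \<bar>v - v'\<bar>)"
proof -
  have upper: "\<bar>min (min u (c 1 + v)) 1 - min (min u' (c 1 + v')) 1\<bar> \<le> \<bar>u - u'\<bar> + \<bar>v - v'\<bar>"
    by (rule order_trans[OF abs_min_diff_le]) (use abs_min_diff_le[of u "c 1 + v" u' "c 1 + v'"] in simp)
  have lower: "\<bar>max (max (-u) (c 1 - v)) (-1) - max (max (-u') (c 1 - v')) (-1)\<bar> \<le> \<bar>u - u'\<bar> + \<bar>v - v'\<bar>"
    by (rule order_trans[OF abs_max_diff_le])
      (use abs_max_diff_le[of "-u" "c 1 - v" "-u'" "c 1 - v'"] in \<open>simp add: abs_minus_commute\<close>)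
  show ?thesis
    unfolding Psi_1_eq
    by (rule order_trans[OF abs_max0_diff_le]) (use add_mono[OF upper lower] in simp)
qed

lemma continuous_on_abs_shift:
  fixes f :: "real \<Rightarrow> real \<Rightarrow> real"
  assumes lip: "\<And>u v u' v'. \<bar>f u v - f u' v'\<bar> \<le> L * (\<bar>u - u'\<bar> + \<bar>v - v'\<bar>)"
  shows "continuous_on S (\<lambda>s. f (a - \<bar>s\<bar>) (b - \<bar>s - d\<bar>))"
proof (rule lipschitz_on_continuous_on[where L = "2 * L"], rule lipschitz_onI)
  show "0 \<le> 2 * L"
    using order_trans[OF abs_ge_zero lip[of 1 0 0 0]] by simp
  fix x y :: real
  have "\<bar>f (a - \<bar>x\<bar>) (b - \<bar>x - d\<bar>) - f (a - \<bar>y\<bar>) (b - \<bar>y - d\<bar>)\<bar>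
      \<le> L * (\<bar>\<bar>x\<bar> - \<bar>y\<bar>\<bar> + \<bar>\<bar>x - d\<bar> - \<bar>y - d\<bar>\<bar>)"
    using lip[of "a - \<bar>x\<bar>" "b - \<bar>x - d\<bar>" "a - \<bar>y\<bar>" "b - \<bar>y - d\<bar>"] by (simp add: abs_minus_commute)
  also have "\<dots> \<le> L * (\<bar>x - y\<bar> + \<bar>x - y\<bar>)"
  proof (rule mult_left_mono)
    show "\<bar>\<bar>x\<bar> - \<bar>y\<bar>\<bar> + \<bar>\<bar>x - d\<bar> - \<bar>y - d\<bar>\<bar> \<le> \<bar>x - y\<bar> + \<bar>x - y\<bar>"
      using abs_triangle_ineq3[of x y] abs_triangle_ineq3[of "x - d" "y - d"] by simp
  qed (use \<open>0 \<le> 2 * L\<close> in simp)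
  finally show "dist (f (a - \<bar>x\<bar>) (b - \<bar>x - d\<bar>)) (f (a - \<bar>y\<bar>) (b - \<bar>y - d\<bar>)) \<le> 2 * L * dist x y"
    by (simp add: dist_real_def)
qed

lemma Psi_Suc_lipschitz_step:
  assumes int: "\<And>a b d. (\<lambda>s. Psi c k (a - \<bar>s\<bar>) (b - \<bar>s - d\<bar>)) integrable_on {-1..1}"
    and lip: "\<And>u v u' v'. \<bar>Psi c k u v - Psi c k u' v'\<bar> \<le> L * (\<bar>u - u'\<bar> + \<bar>v - v'\<bar>)"
  shows "\<bar>Psi c (Suc k) u v - Psi c (Suc k) u' v'\<bar> \<le> 2 * L * (\<bar>u - u'\<bar> + \<bar>v - v'\<bar>)"
proof -
  define d where "d = c (Suc k)"
  define K where "K = L * (\<bar>u - u'\<bar> + \<bar>v - v'\<bar>)"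
  let ?g = "\<lambda>s. Psi c k (u - \<bar>s\<bar>) (v - \<bar>s - d\<bar>) - Psi c k (u' - \<bar>s\<bar>) (v' - \<bar>s - d\<bar>)"
  have "\<bar>Psi c (Suc k) u v - Psi c (Suc k) u' v'\<bar> = norm (integral {-1..1} ?g)"
    by (simp add: d_def Henstock_Kurzweil_Integration.integral_diff[OF int int])
  also have "\<dots> \<le> integral {-1..1::real} (\<lambda>s. K)"
  proof (rule integral_norm_bound_integral)
    show "?g integrable_on {-1..1}"
      using int int by (rule integrable_diff)
    show "norm (?g s) \<le> K" for s
      using lip[of "u - \<bar>s\<bar>" "v - \<bar>s - d\<bar>" "u' - \<bar>s\<bar>" "v' - \<bar>s - d\<bar>"] by (simp add: K_def)
  qed auto
  also have "\<dots> = 2 * L * (\<bar>u - u'\<bar> + \<bar>v - v'\<bar>)"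
    by (simp add: K_def)
  finally show ?thesis .
qed

lemma Psi_Suc_lipschitz:
  "\<bar>Psi c (Suc k) u v - Psi c (Suc k) u' v'\<bar> \<le> 2 ^ Suc k * (\<bar>u - u'\<bar> + \<bar>v - v'\<bar>)"
proof (induction k arbitrary: u v u' v')
  case 0
  then show ?case
    using Psi_1_lipschitz[unfolded One_nat_def] by (simp del: Psi.simps)
next
  case (Suc k)
  have "(\<lambda>s. Psi c (Suc k) (a - \<bar>s\<bar>) (b - \<bar>s - d\<bar>)) integrable_on {-1..1}" for a b d
    by (rule integrable_continuous_interval, rule continuous_on_abs_shift, rule Suc.IH)
  from Psi_Suc_lipschitz_step[OF this Suc.IH] show ?case
    by (simp del: Psi.simps)
qed

lemma integrable_Psi_shift: "(\<lambda>s. Psi c k (a - \<bar>s\<bar>) (b - \<bar>s - d\<bar>)) integrable_on {x..y}"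
proof (cases k)
  case 0
  show ?thesis
    unfolding 0 by (rule integrable_Psi_0_shift)
next
  case (Suc j)
  show ?thesis
    unfolding Suc
    by (rule integrable_continuous_interval, rule continuous_on_abs_shift, rule Psi_Suc_lipschitz)
qed

lemma Psi_mono: "u \<le> u' \<Longrightarrow> v \<le> v' \<Longrightarrow> Psi c k u v \<le> Psi c k u' v'"
proof (induction k arbitrary: u v u' v')
  case (Suc k)
  show ?case
    unfolding Psi.simps
    by (rule integral_le[OF integrable_Psi_shift integrable_Psi_shift]) (use Suc in auto)
qed auto

lemma Psi_nonneg: "0 \<le> Psi c k u v"
proof (induction k arbitrary: u v)
  case (Suc k)
  show ?case
    unfolding Psi.simps by (rule integral_nonneg[OF integrable_Psi_shift Suc.IH])
qed auto

lemma abs_convex_combination_le: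
  fixes m x y :: real
  assumes "0 \<le> m" "m \<le> 1"
  shows "\<bar>m * x + (1 - m) * y\<bar> \<le> m * \<bar>x\<bar> + (1 - m) * \<bar>y\<bar>"
  using abs_triangle_ineq[of "m * x" "(1 - m) * y"] assms by (simp add: abs_mult)

lemma has_integral_affine_comp:
  fixes F :: "real \<Rightarrow> real"
  assumes "F integrable_on {q - m .. q + m}" "0 < m"
  shows "((\<lambda>s. F (m * s + q)) has_integral integral {q - m .. q + m} F / m) {-1..1}"
proof -
  have "(F has_integral integral {q - m .. q + m} F) (cbox (q - m) (q + m))"
    using assms(1) by (simp add: has_integral_integral)
  from has_integral_affinity'[OF this assms(2), of q] show ?thesis
    using assms(2) by (simp add: divide_inverse mult.commute)
qed

lemma integral_affine_comp_le:
  fixes F :: "real \<Rightarrow> real"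
  assumes int: "F integrable_on {-1..1}" and nonneg: "\<And>x. x \<in> {-1..1} \<Longrightarrow> 0 \<le> F x"
    and "0 < m" and "\<bar>q\<bar> + m \<le> 1"
  shows "m * integral {-1..1} (\<lambda>s. F (m * s + q)) \<le> integral {-1..1} F"
proof -
  have sub: "{q - m .. q + m} \<subseteq> {-1..1}"
    using assms(4) by (auto simp: abs_le_iff)
  have "F integrable_on {q - m .. q + m}"
    using integrable_on_subinterval[OF int sub] .
  from integral_unique[OF has_integral_affine_comp[OF this \<open>0 < m\<close>]]
  have "m * integral {-1..1} (\<lambda>s. F (m * s + q)) = integral {q - m .. q + m} F"
    using \<open>0 < m\<close> by simp
  also have "\<dots> \<le> integral {-1..1} F"
    using integrable_on_subinterval[OF int sub] int sub nonneg by (intro integral_subset_le) auto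
  finally show ?thesis .
qed

lemma Psi_affine_contraction:
  assumes c: "\<forall>i\<in>{1..k}. 0 \<le> c i \<and> c i \<le> 2" and m: "0 < m" "m \<le> 1"
  defines "S \<equiv> (\<Sum>i=1..k. c i) / 2"
  shows "m ^ k * Psi c k u v \<le> Psi c k (m * u + (1 - m) * S) (m * v + (1 - m) * S)"
  using c unfolding S_def
proof (induction k arbitrary: u v)
  case (Suc k)
  define d where "d = c (Suc k)"
  define q where "q = (1 - m) * (d / 2)"
  define S where "S = (\<Sum>i=1..k. c i) / 2"
  define U where "U = m * u + (1 - m) * (S + d / 2)"
  define V where "V = m * v + (1 - m) * (S + d / 2)"
  define F where "F = (\<lambda>t. Psi c k (U - \<bar>t\<bar>) (V - \<bar>t - d\<bar>))"
  have d: "0 \<le> d" "d \<le> 2"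
    using Suc.prems by (auto simp: d_def)
  have q: "\<bar>q\<bar> + m \<le> 1"
    using d m mult_left_mono[of "d / 2" 1 "1 - m"] by (auto simp: q_def)
  have IH: "m ^ k * Psi c k x y \<le> Psi c k (m * x + (1 - m) * S) (m * y + (1 - m) * S)" for x y
    using Suc.IH[of x y] Suc.prems by (simp add: S_def)
  have shift_le: "\<bar>m * s + q - t\<bar> \<le> m * \<bar>s - t\<bar> + (1 - m) * (d / 2)" if "t = 0 \<or> t = d" for s t
  proof -
    have "\<bar>m * s + q - t\<bar> = \<bar>m * (s - t) + (1 - m) * (d / 2 - t)\<bar>"
      by (simp add: q_def algebra_simps)
    also have "\<dots> \<le> m * \<bar>s - t\<bar> + (1 - m) * \<bar>d / 2 - t\<bar>"
      using m by (intro abs_convex_combination_le) auto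
    also have "\<bar>d / 2 - t\<bar> = d / 2"
      using that d by auto
    finally show ?thesis .
  qed
  have pointwise: "m ^ k * Psi c k (u - \<bar>s\<bar>) (v - \<bar>s - d\<bar>) \<le> F (m * s + q)" for s
  proof -
    have "m ^ k * Psi c k (u - \<bar>s\<bar>) (v - \<bar>s - d\<bar>)
        \<le> Psi c k (m * (u - \<bar>s\<bar>) + (1 - m) * S) (m * (v - \<bar>s - d\<bar>) + (1 - m) * S)"
      by (rule IH)
    also have "\<dots> \<le> F (m * s + q)"
      unfolding F_def using shift_le[of 0 s] shift_le[of d s]
      by (intro Psi_mono) (simp_all add: U_def V_def algebra_simps)
    finally show ?thesis .
  qed
  have F_int: "F integrable_on {x..y}" for x y
    unfolding F_def by (rule integrable_Psi_shift)
  have F_comp_int: "(\<lambda>s. F (m * s + q)) integrable_on {-1..1}"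
    using has_integral_affine_comp[OF F_int m(1)] by blast
  have "m ^ Suc k * Psi c (Suc k) u v
      = m * integral {-1..1} (\<lambda>s. m ^ k * Psi c k (u - \<bar>s\<bar>) (v - \<bar>s - d\<bar>))"
    by (simp add: d_def)
  also have "\<dots> \<le> m * integral {-1..1} (\<lambda>s. F (m * s + q))"
    using F_comp_int pointwise m(1) integrable_Psi_shift
    by (intro mult_left_mono integral_le integrable_cmul) auto
  also have "\<dots> \<le> integral {-1..1} F"
    using F_int q m(1) by (intro integral_affine_comp_le) (auto simp: F_def Psi_nonneg)
  also have "\<dots> = Psi c (Suc k) U V"
    by (simp add: F_def d_def)
  finally have "m ^ Suc k * Psi c (Suc k) u v \<le> Psi c (Suc k) U V" .
  moreover have "S + d / 2 = (\<Sum>i=1..Suc k. c i) / 2"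
    by (simp add: S_def d_def add_divide_distrib)
  ultimately show ?case
    by (simp only: U_def V_def)
qed (use m in \<open>simp add: zero_le_mult_iff\<close>)

lemma Psi_pos:
  assumes c: "\<forall>i\<in>{1..k}. 0 \<le> c i \<and> c i \<le> 1"
    and "(\<Sum>i=1..k. c i) / 2 < u" "(\<Sum>i=1..k. c i) / 2 < v"
  shows "0 < Psi c k u v"
  using assms
proof (induction k arbitrary: u v)
  case (Suc k)
  define d where "d = c (Suc k)"
  define p where "p = d / 2"
  define S where "S = (\<Sum>i=1..k. c i) / 2"
  have p: "0 \<le> p" "p \<le> 1/2"
    using Suc.prems by (auto simp: p_def d_def)
  have u: "S + p < u" and v: "S + p < v"
    using Suc.prems by (simp_all add: S_def p_def d_def add_divide_distrib)
  define \<delta> where "\<delta> = min (1/2) (min (u - S - p) (v - S - p))"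
  have "0 < \<delta>"
    using u v by (simp add: \<delta>_def)
  have "\<delta> \<le> 1/2" "\<delta> \<le> u - S - p" "\<delta> \<le> v - S - p"
    unfolding \<delta>_def by (intro min.cobounded1 min.coboundedI2 min.coboundedI1 order.refl)+
  define e where "e = \<delta> / 2"
  have e: "0 < e" "e \<le> 1/2" "S < u - p - e" "S < v - p - e"
    using \<open>0 < \<delta>\<close> \<open>\<delta> \<le> 1/2\<close> \<open>\<delta> \<le> u - S - p\<close> \<open>\<delta> \<le> v - S - p\<close> by (simp_all add: e_def)
  define w where "w = Psi c k (u - p - e) (v - p - e)"
  have "0 < w"
    unfolding w_def using Suc.prems(1) e(3,4) by (intro Suc.IH) (simp_all add: S_def)
  have sub: "{p - e .. p + e} \<subseteq> {-1..1}"
    using p e by auto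
  have "2 * e * w = integral {p - e .. p + e} (\<lambda>s. w)"
    using e by simp
  also have "\<dots> \<le> integral {p - e .. p + e} (\<lambda>s. Psi c k (u - \<bar>s\<bar>) (v - \<bar>s - d\<bar>))"
  proof (rule integral_le[OF _ integrable_Psi_shift])
    fix s assume "s \<in> {p - e .. p + e}"
    then have "\<bar>s\<bar> \<le> p + e" "\<bar>s - d\<bar> \<le> p + e"
      using p e by (auto simp: p_def abs_le_iff)
    then show "w \<le> Psi c k (u - \<bar>s\<bar>) (v - \<bar>s - d\<bar>)"
      unfolding w_def by (intro Psi_mono) auto
  qed (rule integrable_const_ivl)
  also have "\<dots> \<le> integral {-1..1} (\<lambda>s. Psi c k (u - \<bar>s\<bar>) (v - \<bar>s - d\<bar>))"
    using sub by (intro integral_subset_le integrable_Psi_shift) (auto simp: Psi_nonneg)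
  also have "\<dots> = Psi c (Suc k) u v"
    by (simp add: d_def)
  finally have "2 * e * w \<le> Psi c (Suc k) u v" .
  moreover have "0 < 2 * e * w"
    using \<open>0 < w\<close> \<open>0 < e\<close> by simp
  ultimately show ?case
    by linarith
qed simp

lemma le_one_if_sum_le_one:
  fixes c :: "nat \<Rightarrow> real"
  assumes "\<forall>i\<in>{1..k}. 0 \<le> c i" "(\<Sum>i=1..k. c i) \<le> 1"
  shows "\<forall>i\<in>{1..k}. 0 \<le> c i \<and> c i \<le> 1"
proof (intro ballI conjI)
  fix i assume i: "i \<in> {1..k}"
  then show "0 \<le> c i"
    using assms(1) by blast
  have "c i \<le> (\<Sum>i=1..k. c i)"
    using i assms(1) by (intro member_le_sum) auto
  then show "c i \<le> 1"
    using assms(2) by linarith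
qed

lemma Psi_dilation_le:
  assumes c: "\<forall>i\<in>{1..k}. 0 \<le> c i" and sum_le: "(\<Sum>i=1..k. c i) \<le> r" and "r \<le> 1"
    and q: "0 < q" "q \<le> 1"
  shows "q ^ (2 * k) * Psi c k (1 / q) (r / q) \<le> Psi c k 1 r"
proof -
  define S where "S = (\<Sum>i=1..k. c i) / 2"
  have "0 \<le> S"
    unfolding S_def using c by (auto intro: sum_nonneg)
  have "(1 - q\<^sup>2) * S = (1 - q) * ((1 + q) * S)"
    by (simp add: power2_eq_square algebra_simps)
  also have "\<dots> \<le> (1 - q) * r"
    using q \<open>0 \<le> S\<close> sum_le mult_right_mono[of "1 + q" 2 S]
    by (intro mult_left_mono) (auto simp: S_def)
  finally have shift: "(1 - q\<^sup>2) * S \<le> (1 - q) * r" .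
  have "q ^ (2 * k) * Psi c k (1 / q) (r / q)
      \<le> Psi c k (q\<^sup>2 * (1 / q) + (1 - q\<^sup>2) * S) (q\<^sup>2 * (r / q) + (1 - q\<^sup>2) * S)"
    unfolding power_mult S_def
    using le_one_if_sum_le_one[OF c] sum_le \<open>r \<le> 1\<close> q
    by (intro Psi_affine_contraction) (auto simp: power_le_one)
  also have "\<dots> \<le> Psi c k 1 r"
    using shift q \<open>r \<le> 1\<close> mult_left_mono[of r 1 "1 - q"]
    by (intro Psi_mono) (auto simp: power2_eq_square algebra_simps)
  finally show ?thesis .
qed

theorem mainTheorem17:
  fixes c :: "nat \<Rightarrow> real" and n :: nat and r M :: real
  assumes "\<forall>i\<in>{1..n}. c i \<ge> 0"
    and "0 < r" and "r \<le> 1"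
    and "(\<Sum>i=1..n. \<bar>c i\<bar>) \<le> r"
    and "M > 0"
  shows "Psi c n 1 r / Psi c n (1 + real n / M) (r * (1 + real n / M))
           \<ge> (M / (M + real n)) ^ (2 * n)"
proof -
  define q where "q = M / (M + real n)"
  have q: "0 < q" "q \<le> 1" "1 + real n / M = 1 / q"
    using \<open>M > 0\<close> by (auto simp: q_def field_simps)
  have "(\<Sum>i=1..n. \<bar>c i\<bar>) = (\<Sum>i=1..n. c i)"
    using assms(1) by (intro sum.cong) auto
  then have sum_le: "(\<Sum>i=1..n. c i) \<le> r"
    using assms(4) by linarith
  have "0 < Psi c n 1 r"
    using le_one_if_sum_le_one[OF assms(1)] sum_le assms(2,3) by (intro Psi_pos) auto
  also have "\<dots> \<le> Psi c n (1 / q) (r / q)"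
    using q(1,2) assms(2) by (intro Psi_mono) (simp_all add: le_divide_eq)
  finally have "0 < Psi c n (1 / q) (r / q)" .
  moreover have "q ^ (2 * n) * Psi c n (1 / q) (r / q) \<le> Psi c n 1 r"
    using Psi_dilation_le[OF assms(1) sum_le assms(3) q(1,2)] .
  ultimately show ?thesis
    unfolding q(3) q_def[symmetric] by (simp add: pos_le_divide_eq mult.commute)
qed

end
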